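(* Let $U\in\mathbb{R}^{d\times n}$ be a frame, $z\in\mathbb{R}^n_{++}$, $c\in\mathbb{R}^n_+$, let $T\subseteq[n]$ have margin $\gamma$, and let $h:=h^{U,z}_T$. Then for any $\alpha\ge1$ satisfying $0\le h(\alpha)-h(1)\le\gamma$, the scaling $z':=z\circ(1_{\bar T}+\alpha1_T)$ satisfies \[\|\mathrm{lev}^U(z)-c\|_2^2-\|\mathrm{lev}^U(z')-c\|_2^2\ge2\gamma(h(\alpha)-h(1)).\]
   Context: A frame is a full row rank matrix $U=(u_1,\dots,u_n)\in\mathbb{R}^{d\times n}$; $Z=\mathrm{diag}(z)$; $\mathrm{lev}^U_j(z):=z_ju_j^{\mathsf T}(UZU^{\mathsf T})^{-1}u_j$; $\bar T=[n]\setminus T$; $1_T$ is the indicator vector; $\circ$ is the entrywise product. Margin of $T$: the largest $\gamma\ge0$ such that some $\nu\in\mathbb{R}$ satisfies $\max_{j\in T}(\mathrm{lev}^U_j(z)-c_j)\le\nu-\gamma\le\nu+\gamma\le\min_{j\notin T}(\mathrm{lev}^U_j(z)-c_j)$. Progress function: $h^{U,z}_T(\alpha):=\sum_{j\in T}\mathrm{lev}^U_j(z\circ(1_{\bar T}+\alpha1_T))$. *)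

theory Defs
  imports "HOL-Analysis.Analysis"
begin

definition frame :: "real^'n^'d \<Rightarrow> bool" where
  "frame U \<longleftrightarrow> rank U = CARD('d)"

definition diagm :: "real^'n \<Rightarrow> real^'n^'n" where
  "diagm z = (\<chi> i j. if i = j then z $ i else 0)"

definition lev :: "real^'n^'d \<Rightarrow> real^'n \<Rightarrow> real^'n" where
  "lev U z = (\<chi> j. z $ j * (column j U \<bullet> (matrix_inv (U ** diagm z ** transpose U) *v column j U)))"

definition ind :: "'n set \<Rightarrow> real^'n" where
  "ind T = (\<chi> j. if j \<in> T then 1 else 0)"

definition had :: "real^'n \<Rightarrow> real^'n \<Rightarrow> real^'n" where
  "had x y = (\<chi> j. x $ j * y $ j)"

definition margin_ok :: "real^'n^'d \<Rightarrow> real^'n \<Rightarrow> real^'n \<Rightarrow> 'n set \<Rightarrow> real \<Rightarrow> bool" where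
  "margin_ok U z c T \<gamma> \<longleftrightarrow> \<gamma> \<ge> 0 \<and> (\<exists>\<nu>::real.
      (\<forall>j\<in>T. lev U z $ j - c $ j \<le> \<nu> - \<gamma>) \<and> \<nu> - \<gamma> \<le> \<nu> + \<gamma> \<and>
      (\<forall>j\<in>-T. \<nu> + \<gamma> \<le> lev U z $ j - c $ j))"

definition has_margin :: "real^'n^'d \<Rightarrow> real^'n \<Rightarrow> real^'n \<Rightarrow> 'n set \<Rightarrow> real \<Rightarrow> bool" where
  "has_margin U z c T \<gamma> \<longleftrightarrow> margin_ok U z c T \<gamma> \<and> (\<forall>\<gamma>'. margin_ok U z c T \<gamma>' \<longrightarrow> \<gamma>' \<le> \<gamma>)"

definition progress :: "real^'n^'d \<Rightarrow> real^'n \<Rightarrow> 'n set \<Rightarrow> real \<Rightarrow> real" where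
  "progress U z T \<alpha> = (\<Sum>j\<in>T. lev U (had z (ind (-T) + \<alpha> *\<^sub>R ind T)) $ j)"

end

theory Submission
  imports Defs
begin

text \<open>Scaling the weights on \<open>T\<close> by \<open>\<alpha> \<ge> 1\<close> raises the leverage scores on \<open>T\<close> and lowers
  those off \<open>T\<close>: \<open>u\<^sup>T M\<^sup>-\<^sup>1 u\<close> is antitone in the Gram matrix \<open>M = U Z U\<^sup>T\<close> with respect to the
  Loewner order, and leverages do not change when all weights are scaled by the same factor.
  Their total is \<open>trace (M\<^sup>-\<^sup>1 M) = d\<close> for every \<open>z\<close>, so passing from \<open>z\<close> to \<open>z'\<close>
  transfers the mass \<open>\<Delta> = h(\<alpha>) - h(1)\<close> from the complement of \<open>T\<close> onto \<open>T\<close>, each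
  coordinate moving by at most \<open>\<Delta>\<close>. Because the margin separates \<open>lev - c\<close> on \<open>T\<close> from
  its values off \<open>T\<close> by \<open>2\<gamma>\<close>, the linear part of the change of \<open>\<parallel>lev - c\<parallel>\<^sup>2\<close> is at
  least \<open>4\<gamma>\<Delta>\<close>, while the quadratic part is at most \<open>2\<Delta>\<^sup>2 \<le> 2\<gamma>\<Delta>\<close>.\<close>

definition gram :: "real^'n^'d \<Rightarrow> real^'n \<Rightarrow> real^'d^'d" where
  "gram U z = U ** diagm z ** transpose U"

lemma matrix_inv_left:
  fixes A :: "'a::semiring_1^'n^'m"
  assumes "invertible A"
  shows "matrix_inv A ** A = mat 1"
  using someI_ex[OF assms[unfolded invertible_def]] unfolding matrix_inv_def by auto

lemma matrix_inv_right:
  fixes A :: "'a::semiring_1^'n^'m"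
  assumes "invertible A"
  shows "A ** matrix_inv A = mat 1"
  using someI_ex[OF assms[unfolded invertible_def]] unfolding matrix_inv_def by auto

lemma matrix_vector_mult_matrix_inv:
  fixes A :: "'a::semiring_1^'n^'m"
  assumes "invertible A"
  shows "A *v (matrix_inv A *v u) = u"
  by (simp add: matrix_vector_mul_assoc matrix_inv_right[OF assms])

lemma matrix_inv_unique:
  fixes A :: "'a::semiring_1^'n^'m"
  assumes "A ** B = mat 1" "B ** A = mat 1"
  shows "matrix_inv A = B"
proof -
  have "invertible A" using assms unfolding invertible_def by blast
  have "matrix_inv A = matrix_inv A ** (A ** B)"
    by (simp add: assms(1))
  also have "\<dots> = B"
    by (simp add: matrix_mul_assoc matrix_inv_left[OF \<open>invertible A\<close>])
  finally show ?thesis .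
qed

lemma matrix_inv_scaleR:
  fixes A :: "real^'n^'n"
  assumes "k \<noteq> 0" "invertible A"
  shows "matrix_inv (k *\<^sub>R A) = inverse k *\<^sub>R matrix_inv A"
  by (rule matrix_inv_unique)
     (simp_all add: assms matrix_scalar_ac matrix_inv_left matrix_inv_right)

lemma diagm_mult_vec: "diagm z *v x = (\<chi> j. z $ j * x $ j)"
  by (simp add: diagm_def matrix_vector_mult_def vec_eq_iff if_distrib[of "\<lambda>t. t * _"] cong: if_cong)

lemma vector_matrix_mult_nth: "(x v* U) $ j = column j U \<bullet> x"
  by (simp add: vector_matrix_mult_def column_def inner_vec_def mult.commute)

lemma gram_quadratic_form:
  "x \<bullet> (gram U z *v x) = (\<Sum>j\<in>UNIV. z $ j * (column j U \<bullet> x)\<^sup>2)"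
proof -
  have "x \<bullet> (gram U z *v x) = (transpose U *v x) \<bullet> (diagm z *v (transpose U *v x))"
    by (simp add: gram_def matrix_vector_mul_assoc[symmetric] dot_lmul_matrix[symmetric])
  then show ?thesis
    by (simp add: inner_vec_def diagm_mult_vec vector_matrix_mult_nth power2_eq_square mult_ac)
qed

lemma transpose_gram: "transpose (gram U z) = gram U z"
proof -
  have "transpose (diagm z) = diagm z"
    by (simp add: diagm_def transpose_def vec_eq_iff)
  then show ?thesis
    by (simp add: gram_def matrix_transpose_mul matrix_mul_assoc)
qed

lemma gram_scaleR: "gram U (k *\<^sub>R z) = k *\<^sub>R gram U z"
proof -
  have "diagm (k *\<^sub>R z) = k *\<^sub>R diagm z"
    by (simp add: diagm_def vec_eq_iff)
  then show ?thesis
    by (simp add: gram_def matrix_scalar_ac scalar_matrix_assoc)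
qed

lemma invertible_gram:
  fixes U :: "real^'n^'d"
  assumes "frame U" "\<forall>j. z $ j > 0"
  shows "invertible (gram U z)"
proof -
  have inj: "inj ((*v) (transpose U))"
    using assms(1) unfolding frame_def by (simp add: full_rank_injective[symmetric] rank_transpose)
  have "x = 0" if "gram U z *v x = 0" for x
  proof -
    have "(\<Sum>j\<in>UNIV. z $ j * (column j U \<bullet> x)\<^sup>2) = 0"
      using that by (simp add: gram_quadratic_form[symmetric])
    then have "\<forall>j. z $ j * (column j U \<bullet> x)\<^sup>2 = 0"
      using assms(2) by (simp add: sum_nonneg_eq_0_iff less_imp_le)
    then have "\<forall>j. column j U \<bullet> x = 0"
      using assms(2) by (metis less_irrefl mult_eq_0_iff zero_eq_power2)
    then have "transpose U *v x = transpose U *v 0"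
      by (simp add: vec_eq_iff vector_matrix_mult_nth)
    then show "x = 0" using inj by (meson injD)
  qed
  then show ?thesis
    by (simp add: invertible_left_inverse matrix_left_invertible_ker)
qed

lemma lev_eq_gram:
  "lev U z $ j = z $ j * (column j U \<bullet> (matrix_inv (gram U z) *v column j U))"
  by (simp add: lev_def gram_def)

lemma lev_eq_diag:
  "lev U z $ j = (diagm z ** transpose U ** (matrix_inv (gram U z) ** U)) $ j $ j"
proof -
  define N where "N = matrix_inv (gram U z)"
  have "(diagm z ** transpose U ** (N ** U)) $ j $ j = z $ j * (transpose U ** (N ** U)) $ j $ j"
    by (simp add: diagm_def matrix_matrix_mult_def if_distrib[of "\<lambda>t. t * _"] sum_distrib_left
        mult.assoc cong: if_cong)
  also have "\<dots> = z $ j * (column j U \<bullet> (N *v column j U))"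
    by (simp add: matrix_matrix_mult_def matrix_vector_mult_def transpose_def column_def inner_vec_def)
  finally show ?thesis by (simp add: lev_eq_gram N_def)
qed

lemma sum_lev_eq_card:
  fixes U :: "real^'n^'d"
  assumes "invertible (gram U z)"
  shows "(\<Sum>j\<in>UNIV. lev U z $ j) = real CARD('d)"
proof -
  have "(\<Sum>j\<in>UNIV. lev U z $ j) = trace ((diagm z ** transpose U) ** (matrix_inv (gram U z) ** U))"
    unfolding trace_def lev_eq_diag ..
  also have "\<dots> = trace (matrix_inv (gram U z) ** (U ** (diagm z ** transpose U)))"
    using trace_mul_sym[of "diagm z ** transpose U" "matrix_inv (gram U z) ** U"]
    by (simp add: matrix_mul_assoc)
  also have "\<dots> = trace (gram U z ** matrix_inv (gram U z))"
    using trace_mul_sym[of "matrix_inv (gram U z)" "gram U z"] by (simp add: gram_def matrix_mul_assoc)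
  finally show ?thesis
    by (simp add: matrix_inv_right[OF assms] trace_I)
qed

text \<open>Antitonicity of \<open>u \<mapsto> u\<^sup>T P\<^sup>-\<^sup>1 u\<close> in the Loewner order, phrased with solutions
  \<open>P y = u\<close>, \<open>Q x = u\<close> instead of inverses.\<close>

lemma inner_solution_antimono:
  fixes P Q :: "real^'d^'d"
  assumes "transpose P = P"
    and "\<And>v. 0 \<le> v \<bullet> (P *v v)"
    and "\<And>v. v \<bullet> (P *v v) \<le> v \<bullet> (Q *v v)"
    and "P *v y = u" and "Q *v x = u"
  shows "u \<bullet> x \<le> u \<bullet> y"
proof -
  have "y \<bullet> (P *v x) = x \<bullet> (P *v y)"
    using assms(1) by (metis dot_lmul_matrix inner_commute transpose_matrix_vector)
  then have "0 \<le> x \<bullet> (P *v x) - 2 * (x \<bullet> u) + y \<bullet> u"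
    using assms(2)[of "x - y"] assms(4)
    by (simp add: matrix_vector_mult_diff_distrib inner_diff_left inner_diff_right)
  moreover have "x \<bullet> (P *v x) \<le> x \<bullet> u"
    using assms(3)[of x] assms(5) by simp
  ultimately show ?thesis
    by (simp add: inner_commute)
qed

lemma lev_scaleR:
  assumes "invertible (gram U z)" "k \<noteq> 0"
  shows "lev U (k *\<^sub>R z) = lev U z"
  using assms
  by (simp add: vec_eq_iff lev_eq_gram gram_scaleR matrix_inv_scaleR scaleR_matrix_vector_assoc[symmetric])

lemma lev_antimono_at_unchanged_weight:
  fixes U :: "real^'n^'d"
  assumes "frame U" "\<forall>i. 0 < z $ i" "\<forall>i. z $ i \<le> z' $ i" "z' $ j = z $ j"
  shows "lev U z' $ j \<le> lev U z $ j"
proof -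
  have "\<forall>i. 0 < z' $ i"
    using assms(2,3) by (meson less_le_trans)
  then have inv: "invertible (gram U z)" "invertible (gram U z')"
    using assms(1,2) by (simp_all add: invertible_gram)
  have "column j U \<bullet> (matrix_inv (gram U z') *v column j U)
      \<le> column j U \<bullet> (matrix_inv (gram U z) *v column j U)"
  proof (rule inner_solution_antimono[OF transpose_gram])
    show "0 \<le> v \<bullet> (gram U z *v v)" for v
      using assms(2) by (simp add: gram_quadratic_form sum_nonneg less_imp_le)
    show "v \<bullet> (gram U z *v v) \<le> v \<bullet> (gram U z' *v v)" for v
      using assms(3) by (simp add: gram_quadratic_form sum_mono mult_right_mono)
  qed (simp_all add: matrix_vector_mult_matrix_inv inv)
  then show ?thesis
    using assms(2,4) by (simp add: lev_eq_gram mult_left_mono less_imp_le)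
qed

lemma block_scaling_nth:
  "had z (ind (-T) + \<alpha> *\<^sub>R ind T) $ j = (if j \<in> T then \<alpha> * z $ j else z $ j)"
  by (simp add: had_def ind_def)

lemma lev_block_scaling_antimono:
  fixes U :: "real^'n^'d"
  assumes "frame U" "\<forall>i. 0 < z $ i" "1 \<le> \<alpha>" "j \<notin> T"
  shows "lev U (had z (ind (-T) + \<alpha> *\<^sub>R ind T)) $ j \<le> lev U z $ j"
  using assms by (intro lev_antimono_at_unchanged_weight) (simp_all add: block_scaling_nth)

lemma lev_block_scaling_mono:
  fixes U :: "real^'n^'d"
  assumes "frame U" "\<forall>i. 0 < z $ i" "1 \<le> \<alpha>" "j \<in> T"
  shows "lev U z $ j \<le> lev U (had z (ind (-T) + \<alpha> *\<^sub>R ind T)) $ j"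
proof -
  define w where "w = inverse \<alpha> *\<^sub>R had z (ind (-T) + \<alpha> *\<^sub>R ind T)"
  have w_nth: "w $ i = (if i \<in> T then z $ i else z $ i / \<alpha>)" for i
    using assms(3) by (simp add: w_def block_scaling_nth field_simps)
  have w_pos: "\<forall>i. 0 < w $ i"
    using assms(2,3) by (simp add: w_nth)
  have "z $ i / \<alpha> \<le> z $ i / 1" for i
    using assms(2,3) by (intro divide_left_mono) (simp_all add: less_imp_le)
  then have "lev U z $ j \<le> lev U w $ j"
    using assms by (intro lev_antimono_at_unchanged_weight) (simp_all add: w_nth w_pos)
  also have "lev U w = lev U (had z (ind (-T) + \<alpha> *\<^sub>R ind T))"
    using assms(3) lev_scaleR[OF invertible_gram[OF assms(1) w_pos], of \<alpha>] by (simp add: w_def)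
  finally show ?thesis .
qed

lemma sum_UNIV_split_Compl:
  fixes f :: "'a::finite \<Rightarrow> 'b::comm_monoid_add"
  shows "sum f UNIV = sum f T + sum f (-T)"
  using sum.Int_Diff[of UNIV f T] by (simp add: Compl_eq_Diff_UNIV)

lemma
  fixes d :: "'a::finite \<Rightarrow> real"
  assumes "sum d UNIV = 0" "\<forall>i\<in>T. 0 \<le> d i" "\<forall>i\<in>-T. d i \<le> 0"
  shows sum_abs_of_balanced: "(\<Sum>i\<in>UNIV. \<bar>d i\<bar>) = 2 * sum d T"
    and abs_le_sum_of_balanced: "\<bar>d j\<bar> \<le> sum d T"
proof -
  have neg: "(\<Sum>i\<in>-T. - d i) = sum d T"
    using assms(1) sum_UNIV_split_Compl[of d T] by (simp add: sum_negf)
  have "(\<Sum>i\<in>UNIV. \<bar>d i\<bar>) = (\<Sum>i\<in>T. d i) + (\<Sum>i\<in>-T. - d i)"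
    using assms(2,3) by (simp add: sum_UNIV_split_Compl[of _ T])
  then show "(\<Sum>i\<in>UNIV. \<bar>d i\<bar>) = 2 * sum d T"
    using neg by simp
  show "\<bar>d j\<bar> \<le> sum d T"
  proof (cases "j \<in> T")
    case True
    then show ?thesis
      using assms(2) member_le_sum[of j T d] by simp
  next
    case False
    then show ?thesis
      using assms(3) member_le_sum[of j "-T" "\<lambda>i. - d i"] neg by simp
  qed
qed

lemma margin_term_lower_bound:
  fixes a d \<nu> \<gamma> \<Delta> :: real
  assumes "0 \<le> d \<and> a \<le> \<nu> - \<gamma> \<or> d \<le> 0 \<and> \<nu> + \<gamma> \<le> a" and "\<bar>d\<bar> \<le> \<Delta>"
  shows "(2 * \<gamma> - \<Delta>) * \<bar>d\<bar> \<le> - 2 * (a - \<nu>) * d - d\<^sup>2"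
proof -
  have cross: "\<gamma> * \<bar>d\<bar> \<le> - (a - \<nu>) * d"
    using assms(1)
  proof
    assume *: "0 \<le> d \<and> a \<le> \<nu> - \<gamma>"
    then have "\<gamma> * d \<le> (\<nu> - a) * d"
      by (intro mult_right_mono) auto
    with * show ?thesis
      by (simp add: algebra_simps)
  next
    assume *: "d \<le> 0 \<and> \<nu> + \<gamma> \<le> a"
    then have "\<gamma> * (- d) \<le> (a - \<nu>) * (- d)"
      by (intro mult_right_mono) auto
    with * show ?thesis
      by (simp add: algebra_simps)
  qed
  have "d\<^sup>2 = \<bar>d\<bar> * \<bar>d\<bar>"
    by (simp add: power2_eq_square)
  also have "\<dots> \<le> \<Delta> * \<bar>d\<bar>"
    using assms(2) by (intro mult_right_mono) simp_all
  finally show ?thesis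
    using cross by (simp add: algebra_simps)
qed

lemma dist_sq_decrease_of_transfer:
  fixes l l' c :: "real^'n" and T :: "'n set"
  assumes mass: "(\<Sum>j\<in>UNIV. l' $ j) = (\<Sum>j\<in>UNIV. l $ j)"
    and up: "\<forall>j\<in>T. l $ j \<le> l' $ j" and down: "\<forall>j\<in>-T. l' $ j \<le> l $ j"
    and below: "\<forall>j\<in>T. l $ j - c $ j \<le> \<nu> - \<gamma>" and above: "\<forall>j\<in>-T. \<nu> + \<gamma> \<le> l $ j - c $ j"
    and small: "(\<Sum>j\<in>T. l' $ j) - (\<Sum>j\<in>T. l $ j) \<le> \<gamma>"
  shows "(norm (l - c))\<^sup>2 - (norm (l' - c))\<^sup>2 \<ge> 2 * \<gamma> * ((\<Sum>j\<in>T. l' $ j) - (\<Sum>j\<in>T. l $ j))"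
proof -
  define d where "d j = l' $ j - l $ j" for j
  define \<Delta> where "\<Delta> = (\<Sum>j\<in>T. l' $ j) - (\<Sum>j\<in>T. l $ j)"
  have balanced: "sum d UNIV = 0" "\<forall>j\<in>T. 0 \<le> d j" "\<forall>j\<in>-T. d j \<le> 0"
    using mass up down by (simp_all add: d_def sum_subtractf)
  have "sum d T = \<Delta>"
    by (simp add: d_def \<Delta>_def sum_subtractf)
  note abs_sum = sum_abs_of_balanced[OF balanced, unfolded this]
    and abs_le = abs_le_sum_of_balanced[OF balanced, unfolded this]
  have "(norm (l - c))\<^sup>2 - (norm (l' - c))\<^sup>2 = (\<Sum>j\<in>UNIV. (l $ j - c $ j)\<^sup>2 - (l' $ j - c $ j)\<^sup>2)"
    unfolding power2_norm_eq_inner by (simp add: inner_vec_def sum_subtractf power2_eq_square)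
  also have "\<dots> = (\<Sum>j\<in>UNIV. - 2 * (l $ j - c $ j - \<nu>) * d j - (d j)\<^sup>2 - 2 * \<nu> * d j)"
    by (intro sum.cong refl) (simp add: d_def power2_eq_square algebra_simps)
  also have "\<dots> = (\<Sum>j\<in>UNIV. - 2 * (l $ j - c $ j - \<nu>) * d j - (d j)\<^sup>2) - 2 * \<nu> * sum d UNIV"
    by (simp only: sum_subtractf sum_distrib_left)
  also have "\<dots> = (\<Sum>j\<in>UNIV. - 2 * (l $ j - c $ j - \<nu>) * d j - (d j)\<^sup>2)"
    using balanced(1) by simp
  also have "\<dots> \<ge> (\<Sum>j\<in>UNIV. (2 * \<gamma> - \<Delta>) * \<bar>d j\<bar>)"
  proof (rule sum_mono, rule margin_term_lower_bound)
    fix j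
    show "0 \<le> d j \<and> l $ j - c $ j \<le> \<nu> - \<gamma> \<or> d j \<le> 0 \<and> \<nu> + \<gamma> \<le> l $ j - c $ j"
      using balanced(2,3) below above by (cases "j \<in> T") simp_all
    show "\<bar>d j\<bar> \<le> \<Delta>"
      by (rule abs_le)
  qed
  also have "(\<Sum>j\<in>UNIV. (2 * \<gamma> - \<Delta>) * \<bar>d j\<bar>) = 2 * \<Delta> * (2 * \<gamma> - \<Delta>)"
    by (simp add: sum_distrib_left[symmetric] abs_sum)
  finally have "2 * \<Delta> * (2 * \<gamma> - \<Delta>) \<le> (norm (l - c))\<^sup>2 - (norm (l' - c))\<^sup>2" .
  moreover have "0 \<le> \<Delta>"
    using abs_sum sum_nonneg[of UNIV "\<lambda>j. \<bar>d j\<bar>"] by simp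
  then have "2 * \<gamma> * \<Delta> \<le> 2 * \<Delta> * (2 * \<gamma> - \<Delta>)"
    using small unfolding \<Delta>_def[symmetric] by (simp add: algebra_simps mult_left_mono)
  ultimately show ?thesis
    unfolding \<Delta>_def[symmetric] by linarith
qed

theorem lemma2p11:
  fixes U :: "real^'n^'d" and z c :: "real^'n" and T :: "'n set" and \<gamma> \<alpha> :: real
  assumes "frame U"
    and "\<forall>j. z $ j > 0"
    and "\<forall>j. c $ j \<ge> 0"
    and "has_margin U z c T \<gamma>"
    and "\<alpha> \<ge> 1"
    and "0 \<le> progress U z T \<alpha> - progress U z T 1"
    and "progress U z T \<alpha> - progress U z T 1 \<le> \<gamma>"
  shows "(norm (lev U z - c))\<^sup>2
           - (norm (lev U (had z (ind (-T) + \<alpha> *\<^sub>R ind T)) - c))\<^sup>2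
         \<ge> 2 * \<gamma> * (progress U z T \<alpha> - progress U z T 1)"
proof -
  define z' where "z' = had z (ind (-T) + \<alpha> *\<^sub>R ind T)"
  have "\<forall>j. 0 < z' $ j"
    using assms(2,5) by (simp add: z'_def block_scaling_nth)
  then have mass: "(\<Sum>j\<in>UNIV. lev U z' $ j) = (\<Sum>j\<in>UNIV. lev U z $ j)"
    using assms(1,2) by (simp add: sum_lev_eq_card invertible_gram)
  have up: "\<forall>j\<in>T. lev U z $ j \<le> lev U z' $ j"
    using assms(1,2,5) by (simp add: z'_def lev_block_scaling_mono)
  have down: "\<forall>j\<in>-T. lev U z' $ j \<le> lev U z $ j"
    using assms(1,2,5) by (simp add: z'_def lev_block_scaling_antimono)
  obtain \<nu> where below: "\<forall>j\<in>T. lev U z $ j - c $ j \<le> \<nu> - \<gamma>"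
    and above: "\<forall>j\<in>-T. \<nu> + \<gamma> \<le> lev U z $ j - c $ j"
    using assms(4) unfolding has_margin_def margin_ok_def by blast
  have "had z (ind (-T) + 1 *\<^sub>R ind T) = z"
    using block_scaling_nth[of z T 1] by (simp add: vec_eq_iff)
  then have "progress U z T \<alpha> - progress U z T 1 = (\<Sum>j\<in>T. lev U z' $ j) - (\<Sum>j\<in>T. lev U z $ j)"
    by (simp add: progress_def z'_def)
  then show ?thesis
    using dist_sq_decrease_of_transfer[OF mass up down below above] assms(7)
    by (simp add: z'_def)
qed

end
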